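(* For every integer $n\geq 3$, every number $p\in(0,\infty)$, and every function $f\colon V\to\mathbb{R}$ defined on the vertex set $V$ of the complete graph $K_n$, we have \[ \mathrm{Var}_p\, M_{K_n} f \leq \Bigl(1-\frac{1}{n}\Bigr)\mathrm{Var}_p f. \] Equivalently, $\mathbf{C}_{K_n,p}\le 1-\frac1n$ (and in fact $\mathbf{C}_{K_n,p}=1-\frac1n$).
   Context: Let $G=(V,E)$ be a finite connected undirected graph, with graph distance $d_G(v,w)$ equal to the number of edges in a shortest path from $v$ to $w$. The ball is $\mathrm{B}_G(v,r)=\{w\in V: d_G(v,w)\le r\}$. The (centered) Hardy–Littlewood maximal operator on $G$ is \[ (M_G f)(v)=\max_{r\ge 0}\frac{1}{|\mathrm{B}_G(v,r)|}\sum_{w\in \mathrm{B}_G(v,r)}|f(w)|,\quad v\in V. \] For $p\in(0,\infty)$, the $p$-variation of $f\colon V\to\mathbb{R}$ is $\mathrm{Var}_p f=\bigl(\sum_{vw\in E}|f(v)-f(w)|^p\bigr)^{1/p}$ (sum over edges, each edge counted once). $\mathbf{C}_{G,p}$ is the smallest number in $[0,\infty]$ such that $\mathrm{Var}_p M_G f\le \mathbf{C}_{G,p}\mathrm{Var}_p f$ for all $f\colon V\to\mathbb{R}$. $K_n$ is the complete graph on $n$ vertices (every pair of distinct vertices joined by an edge). *)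

theory Defs
  imports "HOL-Analysis.Analysis"
begin

text \<open>A finite simple graph is given by a vertex set V and a symmetric irreflexive
  adjacency relation E (only its restriction to V matters).\<close>

definition adj :: "'a set \<Rightarrow> ('a \<Rightarrow> 'a \<Rightarrow> bool) \<Rightarrow> 'a \<Rightarrow> 'a \<Rightarrow> bool" where
  "adj V E v w \<longleftrightarrow> v \<in> V \<and> w \<in> V \<and> E v w"

definition graph_dist :: "'a set \<Rightarrow> ('a \<Rightarrow> 'a \<Rightarrow> bool) \<Rightarrow> 'a \<Rightarrow> 'a \<Rightarrow> nat" where
  "graph_dist V E v w = (LEAST k. (adj V E ^^ k) v w)"

definition ball_G :: "'a set \<Rightarrow> ('a \<Rightarrow> 'a \<Rightarrow> bool) \<Rightarrow> 'a \<Rightarrow> nat \<Rightarrow> 'a set" where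
  "ball_G V E v r = {w \<in> V. graph_dist V E v w \<le> r}"

definition maxop :: "'a set \<Rightarrow> ('a \<Rightarrow> 'a \<Rightarrow> bool) \<Rightarrow> ('a \<Rightarrow> real) \<Rightarrow> 'a \<Rightarrow> real" where
  "maxop V E f v = (SUP r\<in>(UNIV::nat set).
      (\<Sum>w\<in>ball_G V E v r. \<bar>f w\<bar>) / real (card (ball_G V E v r)))"

text \<open>p-variation: sum over edges, each edge counted once (= half of the sum over
  ordered adjacent pairs).\<close>
definition var_p :: "'a set \<Rightarrow> ('a \<Rightarrow> 'a \<Rightarrow> bool) \<Rightarrow> real \<Rightarrow> ('a \<Rightarrow> real) \<Rightarrow> real" where
  "var_p V E p f = ((\<Sum>(v,w)\<in>{(v,w). adj V E v w}. \<bar>f v - f w\<bar> powr p) / 2) powr (1/p)"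

definition K_V :: "nat \<Rightarrow> nat set" where "K_V n = {0..<n}"
definition K_E :: "nat \<Rightarrow> nat \<Rightarrow> bool" where "K_E v w \<longleftrightarrow> v \<noteq> w"

end

theory Submission
  imports Defs
begin

text \<open>On \<open>K\<^sub>n\<close> every ball of positive radius is the whole vertex set, so \<open>M f = max |f| A\<close>
  with \<open>A\<close> the mean of \<open>|f|\<close>: vertices above the mean keep their value, all others are lifted
  to \<open>A\<close>. In terms of the excesses \<open>d\<^sub>i = |f\<^sub>i| - A > 0\<close> and the deficits
  \<open>e\<^sub>w = A - |f\<^sub>w| \<ge> 0\<close>, which have the same total, the \<open>p\<close>-th power of the variation
  of \<open>M f\<close> consists of the terms \<open>|d\<^sub>i - d\<^sub>j|\<^sup>p\<close> and \<open>d\<^sub>i\<^sup>p\<close>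
  (once for every deficit), while that of \<open>|f|\<close> also contains all \<open>(d\<^sub>i + e\<^sub>w)\<^sup>p\<close>
  and \<open>|e\<^sub>w - e\<^sub>x|\<^sup>p\<close>. The inequality with factor \<open>(1 - 1/n)\<^sup>p\<close> is proved row by
  row, comparing each \<open>d\<^sub>i\<^sup>p\<close> with its row \<open>\<Sum>\<^sub>w (d\<^sub>i + e\<^sub>w)\<^sup>p\<close>: for
  \<open>p \<ge> 1\<close> by Jensen's inequality, for \<open>p \<le> 1\<close> by concavity of \<open>t\<^sup>p\<close>, where the row of the
  largest excess needs the deficit differences \<open>|e\<^sub>w - e\<^sub>x|\<^sup>p\<close> when that excess
  exceeds half the total deficit.\<close>

section \<open>Inequalities for real powers\<close>

lemma powr_le_tangent:
  fixes b p :: real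
  assumes "0 \<le> b" "0 \<le> p" "p \<le> 1"
  shows "b powr p \<le> 1 - p + p * b"
proof (cases "b = 0")
  case True
  then show ?thesis using assms by simp
next
  case False
  have "b powr p * 1 powr (1 - p) \<le> p * b + (1 - p) * 1"
    by (rule Youngs_inequality_0) (use assms False in auto)
  then show ?thesis by simp
qed

lemma one_plus_mult_ln_le_powr:
  fixes b p :: real
  assumes "0 < b"
  shows "1 + p * ln b \<le> b powr p"
  using assms exp_ge_add_one_self[of "p * ln b"] by (simp add: powr_def)

lemma powr_ge_tangent:
  fixes b p :: real
  assumes "0 \<le> b" "1 \<le> p"
  shows "1 + p * (b - 1) \<le> b powr p"
proof -
  have "(b powr p) powr (1 / p) \<le> 1 - 1 / p + (1 / p) * b powr p"
    by (rule powr_le_tangent) (use assms in auto)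
  moreover have "(b powr p) powr (1 / p) = b"
    using assms by (simp add: powr_powr)
  ultimately have "p * b \<le> p * (1 - 1 / p + (1 / p) * b powr p)"
    using assms by (simp add: mult_left_mono)
  also have "\<dots> = p - 1 + b powr p"
    using assms by (simp add: algebra_simps)
  finally show ?thesis by (simp add: algebra_simps)
qed

lemma concave_comb_powr_le:
  fixes u v t p :: real
  assumes "0 < u" "0 < v" "0 \<le> t" "t \<le> 1" "0 \<le> p" "p \<le> 1"
  shows "(1 - t) * u powr p + t * v powr p \<le> ((1 - t) * u + t * v) powr p"
proof -
  define M where "M = (1 - t) * u + t * v"
  have "0 < M"
    unfolding M_def using assms
    by (cases "t = 0") (auto intro: add_nonneg_pos)
  have "(1 - t) * (u / M) powr p + t * (v / M) powr p
      \<le> (1 - t) * (1 - p + p * (u / M)) + t * (1 - p + p * (v / M))"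
    using assms \<open>0 < M\<close> by (intro add_mono mult_left_mono powr_le_tangent) auto
  also have "\<dots> = 1 - p + p * (((1 - t) * u + t * v) / M)"
    using \<open>0 < M\<close> by (simp add: field_simps)
  also have "\<dots> = 1"
    using \<open>0 < M\<close> by (simp add: M_def)
  finally have "((1 - t) * u powr p + t * v powr p) / M powr p \<le> 1"
    using assms \<open>0 < M\<close> by (simp add: powr_divide add_divide_distrib)
  then show ?thesis
    using \<open>0 < M\<close> by (simp add: M_def divide_le_eq)
qed

lemma powr_add_add_le:
  fixes d a b p :: real
  assumes "0 < d" "0 \<le> a" "0 \<le> b" "0 \<le> p" "p \<le> 1"
  shows "(d + a + b) powr p + d powr p \<le> (d + a) powr p + (d + b) powr p"
proof (cases "a + b = 0")
  case True
  then have "a = 0" "b = 0"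
    using assms by auto
  then show ?thesis by simp
next
  case False
  define t where "t = a / (a + b)"
  have t: "0 \<le> t" "t \<le> 1" "t * (a + b) = a"
    using assms False by (auto simp: t_def)
  have "d + a = (1 - t) * d + t * (d + a + b)" "d + b = t * d + (1 - t) * (d + a + b)"
    using t(3) by (simp_all add: algebra_simps)
  moreover have "(1 - t) * d powr p + t * (d + a + b) powr p
      \<le> ((1 - t) * d + t * (d + a + b)) powr p"
    using assms t by (intro concave_comb_powr_le) auto
  moreover have "t * d powr p + (1 - t) * (d + a + b) powr p
      \<le> (t * d + (1 - t) * (d + a + b)) powr p"
    using assms t concave_comb_powr_le[of d "d + a + b" "1 - t" p] by auto
  ultimately show ?thesis by (simp add: algebra_simps)
qed

lemma sum_powr_add_ge:
  fixes d p :: real and e :: "'a \<Rightarrow> real"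
  assumes "finite T" "T \<noteq> {}" "0 < d" "\<forall>w\<in>T. 0 \<le> e w" "0 \<le> p" "p \<le> 1"
  shows "(real (card T) - 1) * d powr p + (d + sum e T) powr p \<le> (\<Sum>w\<in>T. (d + e w) powr p)"
  using assms(1,2,4)
proof (induction T rule: finite_ne_induct)
  case (singleton x)
  then show ?case by simp
next
  case (insert x F)
  have "(d + e x + sum e F) powr p + d powr p \<le> (d + e x) powr p + (d + sum e F) powr p"
    using assms insert by (intro powr_add_add_le) (auto intro: sum_nonneg)
  with insert show ?case by (simp add: algebra_simps)
qed

lemma card_mult_powr_mean_le_sum:
  fixes x :: "'a \<Rightarrow> real" and p :: real
  assumes "finite T" "T \<noteq> {}" "\<forall>w\<in>T. 0 < x w" "1 \<le> p"
  shows "real (card T) * (sum x T / real (card T)) powr p \<le> (\<Sum>w\<in>T. x w powr p)"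
proof -
  define m where "m = real (card T)"
  define y where "y = sum x T / m"
  have "0 < m"
    using assms by (simp add: m_def card_gt_0_iff)
  have "0 < sum x T"
    using assms by (intro sum_pos) auto
  then have "0 < y"
    using \<open>0 < m\<close> by (simp add: y_def)
  have "(\<Sum>w\<in>T. 1 + p * (x w / y - 1)) \<le> (\<Sum>w\<in>T. (x w / y) powr p)"
    using assms \<open>0 < y\<close> by (intro sum_mono powr_ge_tangent) auto
  moreover have "(\<Sum>w\<in>T. 1 + p * (x w / y - 1)) = m + p * (sum x T / y - m)"
    by (simp add: m_def sum.distrib sum_subtractf sum_distrib_left[symmetric]
        sum_divide_distrib[symmetric])
  moreover have "sum x T / y = m"
    using \<open>0 < m\<close> \<open>0 < sum x T\<close> by (simp add: y_def)
  moreover have "(\<Sum>w\<in>T. (x w / y) powr p) = (\<Sum>w\<in>T. x w powr p) / y powr p"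
    using assms \<open>0 < y\<close> by (simp add: powr_divide sum_divide_distrib)
  ultimately have "m \<le> (\<Sum>w\<in>T. x w powr p) / y powr p"
    by simp
  then show ?thesis
    using \<open>0 < y\<close> by (simp add: m_def [symmetric] y_def [symmetric] le_divide_eq)
qed

lemma powr_le_add_lipschitz:
  fixes D x y p :: real
  assumes "0 < D" "D \<le> x" "0 \<le> y" "0 \<le> p" "p \<le> 1"
  shows "y powr p \<le> x powr p + p * D powr (p - 1) * \<bar>y - x\<bar>"
proof (cases "y \<le> x")
  case True
  then have "y powr p \<le> x powr p"
    using assms by (intro powr_mono2) auto
  then show ?thesis
    using assms by (simp add: add_increasing2)
next
  case False
  have "(y / x) powr p * x powr p \<le> (1 - p + p * (y / x)) * x powr p"
    using assms by (intro mult_right_mono powr_le_tangent) auto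
  then have "y powr p \<le> x powr p + p * (x powr p / x) * (y - x)"
    using assms by (simp add: powr_divide field_simps)
  also have "x powr p / x = x powr (p - 1)"
    using assms by (simp add: powr_diff)
  also have "p * x powr (p - 1) * (y - x) \<le> p * D powr (p - 1) * (y - x)"
    using assms False by (intro mult_right_mono mult_left_mono powr_mono2') auto
  finally show ?thesis
    using False by simp
qed

lemma powr_ge_mult_self:
  fixes R t p :: real
  assumes "0 \<le> t" "t \<le> R" "p \<le> 1"
  shows "R powr (p - 1) * t \<le> t powr p"
proof (cases "t = 0")
  case True
  then show ?thesis by simp
next
  case False
  then have "R powr (p - 1) \<le> t powr (p - 1)"
    using assms by (intro powr_mono2') auto
  then have "R powr (p - 1) * t \<le> t powr (p - 1) * t"
    using assms by (intro mult_right_mono)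
  also have "\<dots> = t powr p"
    using assms False by (simp add: powr_diff)
  finally show ?thesis .
qed

lemma le_two_powr_minus_one:
  fixes p :: real
  assumes "p \<le> 1"
  shows "p \<le> 2 powr (p - 1)"
proof -
  have "(p - 1) * 1 \<le> (p - 1) * ln 2"
    using assms ln_le_minus_one[of 2] by (intro mult_left_mono_neg) auto
  then show ?thesis
    using one_plus_mult_ln_le_powr[of 2 "p - 1"] by simp
qed

lemma le_ln_one_plus_double:
  fixes x :: real
  assumes "0 \<le> x" "x \<le> 1"
  shows "x \<le> ln (1 + 2 * x)"
proof -
  have "exp 1 powr x \<le> 1 - x + x * exp 1"
    using assms by (intro powr_le_tangent) auto
  also have "\<dots> \<le> 1 + 2 * x"
    using mult_left_mono[OF exp_le, of x] assms by simp
  finally show ?thesis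
    using assms by (subst ln_ge_iff) (auto simp: powr_def)
qed

lemma ln_one_minus_inverse_ge:
  fixes n :: real
  assumes "1 < n"
  shows "- 1 / (n - 1) \<le> ln (1 - 1 / n)"
proof -
  have "1 - 1 / n = inverse (1 + 1 / (n - 1))"
    using assms by (simp add: field_simps)
  moreover have "ln (1 + 1 / (n - 1)) \<le> 1 / (n - 1)"
    using assms by (intro ln_add_one_self_le_self) simp
  moreover have "0 < 1 + 1 / (n - 1)"
    using assms by (simp add: add_pos_nonneg)
  ultimately show ?thesis
    by (simp add: ln_inverse)
qed

section \<open>Sums of pairwise differences\<close>

definition pair_diff_sum :: "real \<Rightarrow> ('a \<Rightarrow> real) \<Rightarrow> 'a set \<Rightarrow> real" where
  "pair_diff_sum p g A = (\<Sum>v\<in>A. \<Sum>w\<in>A. \<bar>g v - g w\<bar> powr p)"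

lemma pair_diff_sum_nonneg: "0 \<le> pair_diff_sum p g A"
  unfolding pair_diff_sum_def by (intro sum_nonneg) auto

lemma pair_diff_sum_Un:
  assumes "finite S" "finite T" "S \<inter> T = {}"
  shows "pair_diff_sum p g (S \<union> T)
    = pair_diff_sum p g S + 2 * (\<Sum>v\<in>S. \<Sum>w\<in>T. \<bar>g v - g w\<bar> powr p) + pair_diff_sum p g T"
proof -
  have "(\<Sum>v\<in>T. \<Sum>w\<in>S. \<bar>g v - g w\<bar> powr p) = (\<Sum>v\<in>S. \<Sum>w\<in>T. \<bar>g v - g w\<bar> powr p)"
    by (subst sum.swap) (simp add: abs_minus_commute)
  with assms show ?thesis
    by (simp add: pair_diff_sum_def sum.union_disjoint sum.distrib)
qed

lemma pair_diff_sum_abs_le: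
  assumes "0 \<le> p"
  shows "pair_diff_sum p (\<lambda>v. \<bar>g v\<bar>) A \<le> pair_diff_sum p g A"
  unfolding pair_diff_sum_def using assms by (intro sum_mono powr_mono2) auto

lemma pair_diff_sum_le:
  assumes "finite S" "\<forall>i\<in>S. 0 \<le> d i" "0 < p"
  shows "pair_diff_sum p d S \<le> 2 * (real (card S) - 1) * (\<Sum>i\<in>S. d i powr p)"
proof -
  have "\<bar>d i - d j\<bar> powr p \<le> d i powr p + d j powr p - (if i = j then 2 * d i powr p else 0)"
    if "i \<in> S" "j \<in> S" for i j
  proof (cases "i = j")
    case False
    have "0 \<le> d i" "0 \<le> d j"
      using assms that by auto
    then have "\<bar>d i - d j\<bar> \<le> max (d i) (d j)"
      by arith
    then have "\<bar>d i - d j\<bar> powr p \<le> max (d i) (d j) powr p"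
      using assms by (intro powr_mono2) auto
    also have "\<dots> \<le> d i powr p + d j powr p"
      by (simp add: max_def)
    finally show ?thesis
      using False by simp
  qed simp
  then have "pair_diff_sum p d S
      \<le> (\<Sum>i\<in>S. \<Sum>j\<in>S. d i powr p + d j powr p - (if i = j then 2 * d i powr p else 0))"
    unfolding pair_diff_sum_def by (intro sum_mono) auto
  also have "\<dots> = (\<Sum>i\<in>S. real (card S) * d i powr p + (\<Sum>j\<in>S. d j powr p) - 2 * d i powr p)"
    using assms(1) by (intro sum.cong) (auto simp: sum.distrib sum_subtractf)
  also have "\<dots> = 2 * (real (card S) - 1) * (\<Sum>i\<in>S. d i powr p)"
    by (simp add: sum.distrib sum_subtractf sum_distrib_left[symmetric] algebra_simps)
  finally show ?thesis .
qed

lemma pair_diff_sum_le_max: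
  assumes "finite S" "i0 \<in> S" "\<forall>i\<in>S. 0 \<le> d i \<and> d i \<le> d i0" "0 < p"
  shows "pair_diff_sum p d S
    \<le> 2 * (real (card S) - 1) * d i0 powr p + 2 * (real (card S) - 2) * (\<Sum>i\<in>S - {i0}. d i powr p)"
proof -
  define S' where "S' = S - {i0}"
  have "finite S'" "{i0} \<inter> S' = {}" "S = {i0} \<union> S'"
    using assms by (auto simp: S'_def)
  have "0 < card S"
    using assms card_gt_0_iff by blast
  then have card: "real (card S') = real (card S) - 1"
    using assms by (simp add: S'_def of_nat_diff)
  have "pair_diff_sum p d S
      = pair_diff_sum p d {i0} + 2 * (\<Sum>j\<in>S'. \<bar>d i0 - d j\<bar> powr p) + pair_diff_sum p d S'"
    using pair_diff_sum_Un[OF _ \<open>finite S'\<close> \<open>{i0} \<inter> S' = {}\<close>] \<open>S = {i0} \<union> S'\<close> by simp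
  also have "pair_diff_sum p d {i0} = 0"
    by (simp add: pair_diff_sum_def)
  also have "(\<Sum>j\<in>S'. \<bar>d i0 - d j\<bar> powr p) \<le> (\<Sum>j\<in>S'. d i0 powr p)"
    using assms by (intro sum_mono powr_mono2) (auto simp: S'_def)
  also have "pair_diff_sum p d S' \<le> 2 * (real (card S') - 1) * (\<Sum>i\<in>S'. d i powr p)"
    using assms \<open>finite S'\<close> by (intro pair_diff_sum_le) (auto simp: S'_def)
  finally show ?thesis
    unfolding S'_def[symmetric] using card by (simp add: algebra_simps)
qed

section \<open>Row estimates\<close>

lemma contraction_powr_le_one:
  fixes n p t :: real
  assumes "3 \<le> n" "0 < p" "p \<le> 1" "0 < t" "t \<le> 1"
  defines "c \<equiv> 1 - 1 / n"
  shows "t powr p + (1 - c powr p) * (1 + (n - 3) * t powr p) \<le> (c * (1 + 2 * t)) powr p"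
proof -
  define L where "L = - ln c"
  have "0 < c" "c \<le> 1"
    using assms by (auto simp: c_def field_simps)
  have "(n - 1) * L \<le> 1"
    using ln_one_minus_inverse_ge[of n] assms by (simp add: L_def c_def field_simps)
  have u_le: "1 - c powr p \<le> p * L"
    using one_plus_mult_ln_le_powr[OF \<open>0 < c\<close>, of p] by (simp add: L_def)
  have u_ge: "0 \<le> 1 - c powr p"
    using \<open>0 < c\<close> \<open>c \<le> 1\<close> assms by (simp add: powr_le1)
  have t_le: "t powr p \<le> 1" "t powr p \<le> 1 - p + p * t"
    using assms by (auto intro: powr_le1 powr_le_tangent)
  have "1 + p * ln (c * (1 + 2 * t)) \<le> (c * (1 + 2 * t)) powr p"
    using \<open>0 < c\<close> assms by (intro one_plus_mult_ln_le_powr) simp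
  moreover have "ln (c * (1 + 2 * t)) = ln (1 + 2 * t) - L"
    using \<open>0 < c\<close> assms by (simp add: L_def ln_mult)
  moreover have "p * t \<le> p * ln (1 + 2 * t)"
    using assms le_ln_one_plus_double[of t] by (intro mult_left_mono) auto
  ultimately have lower: "1 + p * t - p * L \<le> (c * (1 + 2 * t)) powr p"
    by (simp add: right_diff_distrib)
  have "(1 - c powr p) * (1 + (n - 3) * t powr p) \<le> (1 - c powr p) * (n - 2)"
    using assms t_le u_ge mult_left_le[of "t powr p" "n - 3"] by (intro mult_left_mono) auto
  also have "\<dots> \<le> p * L * (n - 2)"
    using assms u_le by (intro mult_right_mono) auto
  finally have "t powr p + (1 - c powr p) * (1 + (n - 3) * t powr p)
      \<le> 1 - p + p * t + p * L * (n - 2)"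
    using t_le by linarith
  also have "\<dots> \<le> 1 + p * t - p * L"
    using \<open>(n - 1) * L \<le> 1\<close> assms mult_left_mono[of "(n - 1) * L" 1 p]
    by (simp add: algebra_simps)
  finally show ?thesis
    using lower by linarith
qed

lemma contraction_mult_succ_ge:
  fixes k m :: real
  assumes "1 \<le> k" "0 < m"
  shows "m \<le> (1 - 1 / (k + m)) * (m + 1)"
proof -
  have "(1 - 1 / (k + m)) * (m + 1) - m = (k - 1) / (k + m)"
    using assms by (simp add: field_simps)
  moreover have "0 \<le> (k - 1) / (k + m)"
    using assms by simp
  ultimately show ?thesis by linarith
qed

lemma contraction_powr_ge_one:
  fixes k m p :: real
  assumes "1 \<le> k" "1 \<le> m" "1 \<le> p"
  defines "c \<equiv> 1 - 1 / (k + m)"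
  shows "m + (1 - c powr p) * (k - 1) \<le> m * (c * (m + 1) / m) powr p"
proof -
  define r where "r = c * (m + 1) / m"
  have "0 \<le> c"
    using assms by (simp add: c_def field_simps)
  have "m * (r - 1) = c * (m + 1) - m"
    using assms by (simp add: r_def right_diff_distrib)
  also have "\<dots> = (k - 1) / (k + m)"
    using assms by (simp add: c_def field_simps)
  finally have mr: "m * (r - 1) = (k - 1) / (k + m)" .
  have "1 + p * (c - 1) \<le> c powr p"
    using assms \<open>0 \<le> c\<close> by (intro powr_ge_tangent) auto
  then have "(1 - c powr p) * (k - 1) \<le> p / (k + m) * (k - 1)"
    using assms by (intro mult_right_mono) (auto simp: c_def)
  also have "\<dots> = p * (m * (r - 1))"
    unfolding mr by simp
  also have "m + p * (m * (r - 1)) = m * (1 + p * (r - 1))"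
    by (simp add: algebra_simps)
  also have "\<dots> \<le> m * r powr p"
    using assms \<open>0 \<le> c\<close> by (intro mult_left_mono powr_ge_tangent) (auto simp: r_def)
  finally show ?thesis
    by (simp add: r_def)
qed

lemma row_bound_ge_one:
  fixes e :: "'a \<Rightarrow> real" and x k p :: real
  assumes T: "finite T" "T \<noteq> {}" and e: "\<forall>w\<in>T. 0 \<le> e w"
    and x: "0 < x" "x \<le> sum e T" and "1 \<le> k" "1 \<le> p"
  defines "c \<equiv> 1 - 1 / (k + real (card T))"
  shows "(real (card T) + (1 - c powr p) * (k - 1)) * x powr p
    \<le> c powr p * (\<Sum>w\<in>T. (x + e w) powr p)"
proof -
  define m where "m = real (card T)"
  define r where "r = c * (m + 1) / m"
  have "1 \<le> m"
    using T by (simp add: m_def Suc_le_eq card_gt_0_iff)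
  have "0 \<le> c"
    using \<open>1 \<le> k\<close> \<open>1 \<le> m\<close> by (simp add: c_def m_def field_simps)
  have "m \<le> c * (m + 1)"
    using contraction_mult_succ_ge[of k m] \<open>1 \<le> k\<close> \<open>1 \<le> m\<close> by (simp add: c_def m_def)
  then have "1 \<le> r"
    using \<open>1 \<le> m\<close> by (simp add: r_def le_divide_eq)
  have "x * r \<le> c * (x + sum e T / m)"
  proof -
    have "c * (x + sum e T / m) - x * r = c * (sum e T - x) / m"
      using \<open>1 \<le> m\<close> by (simp add: r_def field_simps)
    moreover have "0 \<le> c * (sum e T - x) / m"
      using x \<open>0 \<le> c\<close> \<open>1 \<le> m\<close> by simp
    ultimately show ?thesis by linarith
  qed
  have jensen: "m * (x + sum e T / m) powr p \<le> (\<Sum>w\<in>T. (x + e w) powr p)"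
  proof -
    have "sum (\<lambda>w. x + e w) T / m = x + sum e T / m"
      using \<open>1 \<le> m\<close> by (simp add: m_def sum.distrib add_divide_distrib)
    then show ?thesis
      using card_mult_powr_mean_le_sum[of T "\<lambda>w. x + e w" p] T e x \<open>1 \<le> p\<close>
      by (simp add: m_def add_pos_nonneg)
  qed
  have "(m + (1 - c powr p) * (k - 1)) * x powr p \<le> m * r powr p * x powr p"
    using contraction_powr_ge_one[of k m p] \<open>1 \<le> k\<close> \<open>1 \<le> p\<close> \<open>1 \<le> m\<close>
    by (intro mult_right_mono) (auto simp: c_def m_def r_def)
  also have "\<dots> = m * (x * r) powr p"
    using x \<open>1 \<le> r\<close> by (simp add: powr_mult)
  also have "\<dots> \<le> m * (c * (x + sum e T / m)) powr p"
    using x \<open>1 \<le> p\<close> \<open>x * r \<le> _\<close> \<open>1 \<le> m\<close> \<open>1 \<le> r\<close>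
    by (intro mult_left_mono powr_mono2) auto
  also have "\<dots> = c powr p * (m * (x + sum e T / m) powr p)"
    using x \<open>0 \<le> c\<close> \<open>1 \<le> m\<close> by (simp add: powr_mult)
  also have "\<dots> \<le> c powr p * (\<Sum>w\<in>T. (x + e w) powr p)"
    using jensen by (intro mult_left_mono) auto
  finally show ?thesis
    by (simp add: m_def)
qed

lemma row_bound_le_one:
  fixes e :: "'a \<Rightarrow> real" and x D k p :: real
  assumes T: "finite T" "T \<noteq> {}" and e: "\<forall>w\<in>T. 0 \<le> e w"
    and x: "0 < x" "x \<le> D" "D + x \<le> sum e T"
    and n: "3 \<le> k + real (card T)" and p: "0 < p" "p \<le> 1"
  defines "c \<equiv> 1 - 1 / (k + real (card T))"
  shows "real (card T) * x powr p + (1 - c powr p) * (D powr p + (k - 2) * x powr p)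
    \<le> c powr p * (\<Sum>w\<in>T. (x + e w) powr p)"
proof -
  define m where "m = real (card T)"
  define u where "u = 1 - c powr p"
  have "0 < D" "0 < c"
    using x n by (auto simp: c_def field_simps)
  have "(x / D) powr p + u * (1 + (k + m - 3) * (x / D) powr p) \<le> (c * (1 + 2 * (x / D))) powr p"
    using contraction_powr_le_one[of "k + m" p "x / D"] n p x \<open>0 < D\<close>
    by (simp add: u_def c_def m_def)
  then have "D powr p * ((x / D) powr p + u * (1 + (k + m - 3) * (x / D) powr p))
      \<le> D powr p * (c * (1 + 2 * (x / D))) powr p"
    by (intro mult_left_mono) auto
  moreover have "D powr p * (x / D) powr p = x powr p"
    using x \<open>0 < D\<close> by (simp add: powr_divide)
  moreover have "D powr p * (c * (1 + 2 * (x / D))) powr p = c powr p * (D + 2 * x) powr p"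
  proof -
    have "D powr p * (c * (1 + 2 * (x / D))) powr p = (D * (c * (1 + 2 * (x / D)))) powr p"
      using x \<open>0 < D\<close> \<open>0 < c\<close> by (simp add: powr_mult)
    also have "D * (c * (1 + 2 * (x / D))) = c * (D + 2 * x)"
      using \<open>0 < D\<close> by (simp add: field_simps)
    finally show ?thesis
      using x \<open>0 < D\<close> \<open>0 < c\<close> by (simp add: powr_mult)
  qed
  ultimately have scaled:
      "x powr p + u * (D powr p + (k + m - 3) * x powr p) \<le> c powr p * (D + 2 * x) powr p"
    by (simp add: algebra_simps)
  have "(m - 1) * x powr p + (D + 2 * x) powr p \<le> (m - 1) * x powr p + (x + sum e T) powr p"
    using x p by (intro add_left_mono powr_mono2) auto
  also have "\<dots> \<le> (\<Sum>w\<in>T. (x + e w) powr p)"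
    using sum_powr_add_ge[of T x e p] T e x p by (simp add: m_def)
  finally have "c powr p * ((m - 1) * x powr p + (D + 2 * x) powr p)
      \<le> c powr p * (\<Sum>w\<in>T. (x + e w) powr p)"
    by (intro mult_left_mono) auto
  with scaled show ?thesis
    by (simp add: m_def u_def algebra_simps)
qed

lemma mean_dev_le_pair_diff_sum:
  fixes e :: "'a \<Rightarrow> real" and R p :: real
  assumes T: "finite T" and e: "\<forall>w\<in>T. 0 \<le> e w" "sum e T \<le> R" and p: "p \<le> 1"
  shows "R powr (p - 1) * real (card T) * (\<Sum>w\<in>T. \<bar>e w - sum e T / real (card T)\<bar>)
    \<le> pair_diff_sum p e T"
proof -
  define m where "m = real (card T)"
  define a where "a = sum e T / m"
  define B where "B = R powr (p - 1)"
  have mean_dev: "m * \<bar>e w - a\<bar> \<le> (\<Sum>x\<in>T. \<bar>e w - e x\<bar>)" if "w \<in> T" for w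
  proof -
    have "0 < m"
      using T that by (auto simp: m_def card_gt_0_iff)
    then have "m * (e w - a) = (\<Sum>x\<in>T. e w - e x)"
      by (simp add: a_def m_def sum_subtractf right_diff_distrib)
    then have "m * \<bar>e w - a\<bar> = \<bar>\<Sum>x\<in>T. e w - e x\<bar>"
      using \<open>0 < m\<close> by (metis abs_mult abs_of_pos)
    then show ?thesis
      by simp
  qed
  have linear_le_powr: "B * \<bar>e w - e x\<bar> \<le> \<bar>e w - e x\<bar> powr p" if "w \<in> T" "x \<in> T" for w x
  proof -
    have "0 \<le> e w" "0 \<le> e x" "e w \<le> sum e T" "e x \<le> sum e T"
      using T e that by (auto intro: member_le_sum)
    with e have "\<bar>e w - e x\<bar> \<le> R"
      by arith
    then show ?thesis
      using p by (simp add: B_def powr_ge_mult_self)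
  qed
  have "0 \<le> B"
    by (simp add: B_def)
  with mean_dev have "(\<Sum>w\<in>T. B * (m * \<bar>e w - a\<bar>)) \<le> (\<Sum>w\<in>T. \<Sum>x\<in>T. B * \<bar>e w - e x\<bar>)"
    by (intro sum_mono) (auto simp: sum_distrib_left [symmetric] mult_left_mono)
  also have "\<dots> \<le> pair_diff_sum p e T"
    unfolding pair_diff_sum_def using linear_le_powr by (intro sum_mono) auto
  finally show ?thesis
    by (simp add: B_def m_def a_def sum_distrib_left algebra_simps)
qed

text \<open>For \<open>p \<le> 1\<close> Jensen's inequality points the wrong way; the defect is paid for by the
  spread of \<open>e\<close> around its mean, which the pairwise differences dominate.\<close>

lemma powr_mean_le_sum_add_pair_diff:
  fixes e :: "'a \<Rightarrow> real" and D p :: real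
  assumes T: "finite T" "T \<noteq> {}" and e: "\<forall>w\<in>T. 0 \<le> e w" and D: "0 < D" "sum e T \<le> 2 * D"
    and p: "0 < p" "p \<le> 1"
  shows "2 * real (card T) * (D + sum e T / real (card T)) powr p
    \<le> 2 * (\<Sum>w\<in>T. (D + e w) powr p) + pair_diff_sum p e T"
proof -
  define m where "m = real (card T)"
  define a where "a = sum e T / m"
  define K where "K = p * D powr (p - 1)"
  define B where "B = (2 * D) powr (p - 1)"
  define dev where "dev = (\<Sum>w\<in>T. \<bar>e w - a\<bar>)"
  have "0 \<le> a"
    using e by (simp add: a_def m_def sum_nonneg)
  have "0 \<le> dev"
    by (simp add: dev_def sum_nonneg)
  have "(D + a) powr p \<le> (D + e w) powr p + K * \<bar>e w - a\<bar>" if "w \<in> T" for w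
    using powr_le_add_lipschitz[of D "D + e w" "D + a" p] e that D p \<open>0 \<le> a\<close>
    by (simp add: K_def abs_minus_commute)
  then have "(\<Sum>w\<in>T. (D + a) powr p) \<le> (\<Sum>w\<in>T. (D + e w) powr p + K * \<bar>e w - a\<bar>)"
    by (rule sum_mono)
  then have lipschitz: "m * (D + a) powr p \<le> (\<Sum>w\<in>T. (D + e w) powr p) + K * dev"
    by (simp add: m_def dev_def sum.distrib sum_distrib_left)
  have spread: "B * m * dev \<le> pair_diff_sum p e T"
    using mean_dev_le_pair_diff_sum[OF T(1) e D(2) p(2)] by (simp add: B_def m_def a_def dev_def)
  have "2 * K * dev \<le> B * m * dev"
  proof (cases "card T = 1")
    case True
    then obtain w where "T = {w}"
      by (auto simp: card_Suc_eq)
    then have "dev = 0"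
      by (simp add: dev_def a_def m_def)
    then show ?thesis by simp
  next
    case False
    moreover have "card T \<noteq> 0"
      using T by simp
    ultimately have "2 \<le> m"
      by (simp add: m_def)
    have "K \<le> 2 powr (p - 1) * D powr (p - 1)"
      using le_two_powr_minus_one[of p] p by (simp add: K_def mult_right_mono)
    also have "\<dots> = B"
      using D by (simp add: B_def powr_mult)
    finally have "2 * K \<le> B * m"
      using \<open>2 \<le> m\<close> mult_left_mono[OF \<open>2 \<le> m\<close>, of B] by (simp add: B_def)
    then show ?thesis
      using \<open>0 \<le> dev\<close> by (intro mult_right_mono)
  qed
  with lipschitz spread
  have "2 * m * (D + a) powr p \<le> 2 * (\<Sum>w\<in>T. (D + e w) powr p) + pair_diff_sum p e T"
    by linarith
  then show ?thesis
    by (simp add: m_def a_def)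
qed

lemma heavy_row_bound:
  fixes e :: "'a \<Rightarrow> real" and D k p :: real
  assumes T: "finite T" "T \<noteq> {}" and e: "\<forall>w\<in>T. 0 \<le> e w"
    and D: "0 < D" "D \<le> sum e T" "sum e T \<le> 2 * D" and p: "0 < p" "p \<le> 1" and "1 \<le> k"
  defines "c \<equiv> 1 - 1 / (k + real (card T))"
  shows "2 * real (card T) * D powr p
    \<le> c powr p * (2 * (\<Sum>w\<in>T. (D + e w) powr p) + pair_diff_sum p e T)"
proof -
  define m where "m = real (card T)"
  have "1 \<le> m"
    using T by (simp add: m_def Suc_le_eq card_gt_0_iff)
  have "0 < c"
    using \<open>1 \<le> k\<close> \<open>1 \<le> m\<close> by (simp add: c_def m_def field_simps)
  have "m * D \<le> c * (m + 1) * D"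
    using contraction_mult_succ_ge[of k m] \<open>1 \<le> k\<close> \<open>1 \<le> m\<close> D
    by (intro mult_right_mono) (auto simp: c_def m_def)
  also have "\<dots> \<le> c * (m * D + sum e T)"
    using D \<open>0 < c\<close> by (simp add: algebra_simps)
  finally have "D \<le> c * (D + sum e T / m)"
    using \<open>1 \<le> m\<close> by (simp add: field_simps)
  then have "2 * m * D powr p \<le> 2 * m * (c * (D + sum e T / m)) powr p"
    using D p \<open>1 \<le> m\<close> by (intro mult_left_mono powr_mono2) auto
  also have "\<dots> = c powr p * (2 * m * (D + sum e T / m) powr p)"
    using D e \<open>0 < c\<close> \<open>1 \<le> m\<close> by (simp add: powr_mult sum_nonneg)
  also have "\<dots> \<le> c powr p * (2 * (\<Sum>w\<in>T. (D + e w) powr p) + pair_diff_sum p e T)"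
    using powr_mean_le_sum_add_pair_diff[OF T e D(1,3) p]
    by (intro mult_left_mono) (auto simp: m_def)
  finally show ?thesis
    by (simp add: m_def)
qed

lemma top_row_bound:
  fixes e :: "'a \<Rightarrow> real" and D k p :: real
  assumes T: "finite T" "T \<noteq> {}" and e: "\<forall>w\<in>T. 0 \<le> e w" and D: "0 < D" "D \<le> sum e T"
    and k: "1 \<le> k" "3 \<le> k + real (card T)" and p: "0 < p" "p \<le> 1"
  defines "c \<equiv> 1 - 1 / (k + real (card T))"
  shows "2 * real (card T) * D powr p
    \<le> c powr p * (2 * (\<Sum>w\<in>T. (D + e w) powr p) + pair_diff_sum p e T)"
proof (cases "sum e T \<le> 2 * D")
  case True
  then show ?thesis
    using heavy_row_bound[OF T e D True p k(1)] by (simp add: c_def)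
next
  case False
  have "c powr p \<le> 1"
    using k p by (intro powr_le1) (auto simp: c_def field_simps)
  have "real (card T) * D powr p + (1 - c powr p) * ((k - 1) * D powr p)
      \<le> c powr p * (\<Sum>w\<in>T. (D + e w) powr p)"
    using row_bound_le_one[OF T e D(1) order_refl _ k(2) p] False
    by (simp add: c_def algebra_simps)
  moreover have "0 \<le> (1 - c powr p) * ((k - 1) * D powr p)"
    using \<open>c powr p \<le> 1\<close> k by simp
  moreover have "0 \<le> c powr p * pair_diff_sum p e T"
    by (simp add: pair_diff_sum_nonneg)
  ultimately show ?thesis
    by (simp add: algebra_simps)
qed

section \<open>Excesses and deficits\<close>

lemma pair_diff_bound_of_uniform_rows:
  fixes d e :: "'a \<Rightarrow> real" and c p :: real
  assumes S: "finite S" "\<forall>i\<in>S. 0 \<le> d i" and p: "0 < p" and c: "c powr p \<le> 1"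
    and rows: "\<forall>i\<in>S. (real (card T) + (1 - c powr p) * (real (card S) - 1)) * d i powr p
      \<le> c powr p * (\<Sum>w\<in>T. (d i + e w) powr p)"
  shows "pair_diff_sum p d S + 2 * real (card T) * (\<Sum>i\<in>S. d i powr p)
    \<le> c powr p * (pair_diff_sum p d S + 2 * (\<Sum>i\<in>S. \<Sum>w\<in>T. (d i + e w) powr p)
      + pair_diff_sum p e T)"
proof -
  define u where "u = 1 - c powr p"
  define k m where "k = real (card S)" and "m = real (card T)"
  define SP DS X where "SP = pair_diff_sum p d S" and "DS = (\<Sum>i\<in>S. d i powr p)"
    and "X = (\<Sum>i\<in>S. \<Sum>w\<in>T. (d i + e w) powr p)"
  have "u * SP \<le> u * (2 * (k - 1) * DS)"
    using pair_diff_sum_le[OF S p] c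
    by (intro mult_left_mono) (auto simp: u_def SP_def DS_def k_def)
  moreover have "(m + u * (k - 1)) * DS \<le> c powr p * X"
    using rows unfolding DS_def X_def sum_distrib_left
    by (intro sum_mono) (auto simp: u_def k_def m_def)
  moreover have "0 \<le> c powr p * pair_diff_sum p e T"
    by (simp add: pair_diff_sum_nonneg)
  moreover have "SP + 2 * m * DS = c powr p * SP + (u * SP + 2 * m * DS)"
    by (simp add: u_def algebra_simps)
  ultimately show ?thesis
    unfolding SP_def[symmetric] DS_def[symmetric] X_def[symmetric] m_def[symmetric]
    by (simp add: algebra_simps)
qed

lemma pair_diff_bound_of_dominant_rows:
  fixes d e :: "'a \<Rightarrow> real" and c p :: real and i0 :: 'a
  assumes S: "finite S" "i0 \<in> S" "\<forall>i\<in>S. 0 \<le> d i \<and> d i \<le> d i0" and p: "0 < p"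
    and c: "c powr p \<le> 1"
    and row0: "2 * real (card T) * d i0 powr p
      \<le> c powr p * (2 * (\<Sum>w\<in>T. (d i0 + e w) powr p) + pair_diff_sum p e T)"
    and rows: "\<forall>j\<in>S - {i0}. real (card T) * d j powr p
      + (1 - c powr p) * (d i0 powr p + (real (card S) - 2) * d j powr p)
      \<le> c powr p * (\<Sum>w\<in>T. (d j + e w) powr p)"
  shows "pair_diff_sum p d S + 2 * real (card T) * (\<Sum>i\<in>S. d i powr p)
    \<le> c powr p * (pair_diff_sum p d S + 2 * (\<Sum>i\<in>S. \<Sum>w\<in>T. (d i + e w) powr p)
      + pair_diff_sum p e T)"
proof -
  define u where "u = 1 - c powr p"
  define k m where "k = real (card S)" and "m = real (card T)"
  define S' where "S' = S - {i0}"
  define X where "X = (\<lambda>i. \<Sum>w\<in>T. (d i + e w) powr p)"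
  define SP Sg TP where "SP = pair_diff_sum p d S" and "Sg = (\<Sum>j\<in>S'. d j powr p)"
    and "TP = pair_diff_sum p e T"
  have "0 < card S"
    using S card_gt_0_iff by blast
  then have card: "real (card S') = k - 1"
    using S by (simp add: S'_def k_def of_nat_diff)
  have uSP: "u * SP \<le> u * (2 * (k - 1) * d i0 powr p + 2 * (k - 2) * Sg)"
    using pair_diff_sum_le_max[OF S p] c
    by (intro mult_left_mono) (auto simp: u_def SP_def Sg_def k_def S'_def)
  have "(\<Sum>j\<in>S'. m * d j powr p + u * (d i0 powr p + (k - 2) * d j powr p))
      \<le> (\<Sum>j\<in>S'. c powr p * X j)"
    using rows by (intro sum_mono) (auto simp: u_def k_def m_def X_def S'_def)
  moreover have "(\<Sum>j\<in>S'. m * d j powr p + u * (d i0 powr p + (k - 2) * d j powr p))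
      = m * Sg + (k - 1) * (u * d i0 powr p) + u * (k - 2) * Sg"
    using card by (simp add: Sg_def sum.distrib distrib_left sum_distrib_left mult.assoc)
  ultimately have rows_sum:
    "m * Sg + (k - 1) * (u * d i0 powr p) + u * (k - 2) * Sg \<le> c powr p * (\<Sum>j\<in>S'. X j)"
    by (simp add: sum_distrib_left)
  have "SP + 2 * m * (d i0 powr p + Sg)
      = c powr p * SP + u * SP + 2 * m * d i0 powr p + 2 * m * Sg"
    by (simp add: u_def algebra_simps)
  also have "\<dots> \<le> c powr p * SP + u * (2 * (k - 1) * d i0 powr p + 2 * (k - 2) * Sg)
      + 2 * m * d i0 powr p + 2 * m * Sg"
    using uSP by simp
  also have "\<dots> = c powr p * SP + 2 * m * d i0 powr p
      + 2 * (m * Sg + (k - 1) * (u * d i0 powr p) + u * (k - 2) * Sg)"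
    by (simp add: algebra_simps)
  also have "\<dots> \<le> c powr p * SP + c powr p * (2 * X i0 + TP) + 2 * (c powr p * (\<Sum>j\<in>S'. X j))"
    using row0 rows_sum by (simp add: X_def TP_def m_def)
  also have "\<dots> = c powr p * (SP + 2 * (X i0 + (\<Sum>j\<in>S'. X j)) + TP)"
    by (simp add: algebra_simps)
  finally show ?thesis
    using S by (simp add: SP_def TP_def Sg_def X_def m_def S'_def sum.remove)
qed

lemma pair_diff_sum_excess_bound:
  fixes d e :: "'a \<Rightarrow> real" and p :: real
  assumes S: "finite S" "S \<noteq> {}" and T: "finite T" "T \<noteq> {}" and n: "3 \<le> card S + card T"
    and d: "\<forall>i\<in>S. 0 < d i" and e: "\<forall>w\<in>T. 0 \<le> e w" and sums: "sum d S = sum e T"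
    and p: "0 < p"
  defines "c \<equiv> 1 - 1 / real (card S + card T)"
  shows "pair_diff_sum p d S + 2 * real (card T) * (\<Sum>i\<in>S. d i powr p)
    \<le> c powr p * (pair_diff_sum p d S + 2 * (\<Sum>i\<in>S. \<Sum>w\<in>T. (d i + e w) powr p)
      + pair_diff_sum p e T)"
proof -
  define k where "k = real (card S)"
  have c_eq: "c = 1 - 1 / (k + real (card T))"
    by (simp add: c_def k_def)
  have "1 \<le> k"
    using S by (simp add: k_def Suc_le_eq card_gt_0_iff)
  have n': "3 \<le> k + real (card T)"
    using n by (simp add: k_def)
  have "c powr p \<le> 1"
    using n p by (intro powr_le1) (auto simp: c_def field_simps)
  have d_le: "d i \<le> sum e T" if "i \<in> S" for i
    using member_le_sum[of i S d] S d that sums by (auto intro: less_imp_le)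
  show ?thesis
  proof (cases "1 \<le> p")
    case True
    show ?thesis
      using d row_bound_ge_one[OF T e _ d_le \<open>1 \<le> k\<close> True] \<open>c powr p \<le> 1\<close>
      by (intro pair_diff_bound_of_uniform_rows) (auto simp: S p c_eq k_def less_imp_le)
  next
    case False
    have "Max (d ` S) \<in> d ` S"
      using S by (intro Max_in) auto
    then obtain i0 where "i0 \<in> S" "d i0 = Max (d ` S)"
      by (metis imageE)
    then have i0: "i0 \<in> S" "\<forall>i\<in>S. d i \<le> d i0"
      using S by auto
    txt \<open>Any two excesses together are at most the total, so only the largest one can exceed half
      of it.\<close>
    have pair_le: "d i0 + d j \<le> sum e T" if "j \<in> S - {i0}" for j
    proof -
      have "sum d {i0, j} \<le> sum d S"
        using S d i0 that by (intro sum_mono2) (auto intro: less_imp_le)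
      then show ?thesis
        using that sums by auto
    qed
    have rows: "\<forall>j\<in>S - {i0}. real (card T) * d j powr p
        + (1 - c powr p) * (d i0 powr p + (real (card S) - 2) * d j powr p)
        \<le> c powr p * (\<Sum>w\<in>T. (d j + e w) powr p)"
      using row_bound_le_one[OF T e _ _ pair_le n' p] d i0 False
      by (auto simp: c_eq k_def)
    moreover have "2 * real (card T) * d i0 powr p
        \<le> c powr p * (2 * (\<Sum>w\<in>T. (d i0 + e w) powr p) + pair_diff_sum p e T)"
      using top_row_bound[OF T e _ d_le \<open>1 \<le> k\<close> n' p] d i0 False by (simp add: c_eq)
    ultimately show ?thesis
      using d i0 \<open>c powr p \<le> 1\<close>
      by (intro pair_diff_bound_of_dominant_rows) (auto simp: S p less_imp_le)
  qed
qed

lemma pair_diff_sum_split_at_level: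
  fixes g :: "'a \<Rightarrow> real" and A p :: real
  assumes "finite V"
  defines "S \<equiv> {v \<in> V. A < g v}" and "T \<equiv> {v \<in> V. g v \<le> A}"
  shows "pair_diff_sum p (\<lambda>v. max (g v) A) V
      = pair_diff_sum p (\<lambda>v. g v - A) S + 2 * real (card T) * (\<Sum>i\<in>S. (g i - A) powr p)"
    and "pair_diff_sum p g V = pair_diff_sum p (\<lambda>v. g v - A) S
      + 2 * (\<Sum>i\<in>S. \<Sum>w\<in>T. (g i - A + (A - g w)) powr p) + pair_diff_sum p (\<lambda>v. A - g v) T"
proof -
  define a where "a = (\<lambda>v. max (g v) A)"
  have VST: "V = S \<union> T" "finite S" "finite T" "S \<inter> T = {}"
    using \<open>finite V\<close> by (auto simp: S_def T_def)
  have "pair_diff_sum p a S = pair_diff_sum p (\<lambda>v. g v - A) S"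
    unfolding pair_diff_sum_def by (intro sum.cong refl) (auto simp: a_def S_def)
  moreover have "(\<Sum>v\<in>S. \<Sum>w\<in>T. \<bar>a v - a w\<bar> powr p) = real (card T) * (\<Sum>i\<in>S. (g i - A) powr p)"
    by (simp add: sum_distrib_left a_def S_def T_def)
  moreover have "pair_diff_sum p a T = 0"
    by (simp add: pair_diff_sum_def a_def T_def max_absorb2)
  ultimately show "pair_diff_sum p a V
      = pair_diff_sum p (\<lambda>v. g v - A) S + 2 * real (card T) * (\<Sum>i\<in>S. (g i - A) powr p)"
    unfolding VST(1) pair_diff_sum_Un[OF VST(2-4)] by simp
  have "pair_diff_sum p g S = pair_diff_sum p (\<lambda>v. g v - A) S"
    "pair_diff_sum p g T = pair_diff_sum p (\<lambda>v. A - g v) T"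
    by (simp_all add: pair_diff_sum_def abs_minus_commute)
  moreover have "(\<Sum>v\<in>S. \<Sum>w\<in>T. \<bar>g v - g w\<bar> powr p)
      = (\<Sum>i\<in>S. \<Sum>w\<in>T. (g i - A + (A - g w)) powr p)"
    by (intro sum.cong refl) (auto simp: S_def T_def)
  ultimately show "pair_diff_sum p g V = pair_diff_sum p (\<lambda>v. g v - A) S
      + 2 * (\<Sum>i\<in>S. \<Sum>w\<in>T. (g i - A + (A - g w)) powr p) + pair_diff_sum p (\<lambda>v. A - g v) T"
    unfolding VST(1) pair_diff_sum_Un[OF VST(2-4)] by simp
qed

lemma pair_diff_sum_max_mean_le:
  fixes g :: "'a \<Rightarrow> real" and p :: real
  assumes V: "finite V" "3 \<le> card V" and p: "0 < p"
  defines "A \<equiv> sum g V / real (card V)"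
  shows "pair_diff_sum p (\<lambda>v. max (g v) A) V
    \<le> (1 - 1 / real (card V)) powr p * pair_diff_sum p g V"
proof -
  define S T where "S = {v \<in> V. A < g v}" and "T = {v \<in> V. g v \<le> A}"
  note level_split =
    pair_diff_sum_split_at_level[OF V(1), where g = g and A = A and p = p, folded S_def T_def]
  have VST: "V = S \<union> T" "finite S" "finite T" "S \<inter> T = {}"
    using V by (auto simp: S_def T_def)
  have "(\<Sum>v\<in>V. g v - A) = 0"
    using V by (simp add: A_def sum_subtractf)
  then have "(\<Sum>v\<in>S. g v - A) + (\<Sum>v\<in>T. g v - A) = 0"
    using VST by (simp add: sum.union_disjoint)
  then have sums: "(\<Sum>v\<in>S. g v - A) = (\<Sum>v\<in>T. A - g v)"
    unfolding sum_subtractf by linarith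
  show ?thesis
  proof (cases "S = {}")
    case True
    then have "pair_diff_sum p (\<lambda>v. max (g v) A) V = 0"
      using level_split(1) by (simp add: pair_diff_sum_def)
    then show ?thesis
      by (simp add: pair_diff_sum_nonneg)
  next
    case False
    have "T \<noteq> {}"
    proof
      assume "T = {}"
      then have "(\<Sum>v\<in>S. 0) < (\<Sum>v\<in>S. g v - A)"
        using VST False by (intro sum_strict_mono) (auto simp: S_def)
      with sums \<open>T = {}\<close> show False by simp
    qed
    moreover have "\<forall>i\<in>S. 0 < g i - A" "\<forall>w\<in>T. 0 \<le> A - g w"
      by (simp_all add: S_def T_def)
    moreover have card: "card S + card T = card V"
      using VST by (simp add: card_Un_disjoint)
    ultimately show ?thesis
      unfolding level_split
      by (intro pair_diff_sum_excess_bound[OF VST(2) False VST(3), unfolded card])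
        (use V(2) sums p in auto)
  qed
qed

section \<open>The complete graph\<close>

lemma adj_K: "adj (K_V n) K_E v w \<longleftrightarrow> v < n \<and> w < n \<and> v \<noteq> w"
  by (auto simp: adj_def K_V_def K_E_def)

lemma graph_dist_K:
  assumes "v < n" "w < n"
  shows "graph_dist (K_V n) K_E v w = (if v = w then 0 else 1)"
proof (cases "v = w")
  case True
  then show ?thesis
    by (auto simp: graph_dist_def intro: Least_equality)
next
  case False
  have "(LEAST k. (adj (K_V n) K_E ^^ k) v w) = 1"
  proof (rule Least_equality)
    show "(adj (K_V n) K_E ^^ 1) v w"
      unfolding relpowp_1 using assms False by (simp add: adj_K)
    show "1 \<le> k" if "(adj (K_V n) K_E ^^ k) v w" for k
      using that False by (cases k) auto
  qed
  with False show ?thesis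
    by (simp add: graph_dist_def)
qed

lemma ball_G_K:
  assumes "v < n"
  shows "ball_G (K_V n) K_E v r = (if r = 0 then {v} else {..<n})"
  using assms graph_dist_K[OF assms] by (auto simp: ball_G_def K_V_def split: if_splits)

lemma maxop_K:
  assumes "v < n"
  shows "maxop (K_V n) K_E f v = max \<bar>f v\<bar> ((\<Sum>w<n. \<bar>f w\<bar>) / real n)"
proof -
  define A where "A = (\<Sum>w<n. \<bar>f w\<bar>) / real n"
  have "range (\<lambda>r::nat. if r = 0 then \<bar>f v\<bar> else A) = {\<bar>f v\<bar>, A}"
    by (auto simp: image_iff intro: exI[of _ "Suc 0"])
  moreover have "(\<Sum>w\<in>ball_G (K_V n) K_E v r. \<bar>f w\<bar>) / real (card (ball_G (K_V n) K_E v r))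
      = (if r = 0 then \<bar>f v\<bar> else A)" for r
    using ball_G_K[OF assms, of r] by (simp add: A_def)
  ultimately have "maxop (K_V n) K_E f v = Sup {\<bar>f v\<bar>, A}"
    unfolding maxop_def by simp
  then show ?thesis
    by (simp add: A_def cSup_insert sup_max)
qed

lemma var_p_K: "var_p (K_V n) K_E p g = (pair_diff_sum p g {..<n} / 2) powr (1 / p)"
proof -
  have "{(v, w). adj (K_V n) K_E v w} = Sigma {..<n} (\<lambda>v. {..<n} - {v})"
    by (auto simp: adj_K)
  then have "(\<Sum>(v, w)\<in>{(v, w). adj (K_V n) K_E v w}. \<bar>g v - g w\<bar> powr p)
      = (\<Sum>v<n. \<Sum>w\<in>{..<n} - {v}. \<bar>g v - g w\<bar> powr p)"
    by (simp add: sum.Sigma)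
  also have "\<dots> = pair_diff_sum p g {..<n}"
    unfolding pair_diff_sum_def
  proof (rule sum.cong [OF refl])
    fix v :: nat
    assume "v \<in> {..<n}"
    then show "(\<Sum>w\<in>{..<n} - {v}. \<bar>g v - g w\<bar> powr p) = (\<Sum>w<n. \<bar>g v - g w\<bar> powr p)"
      using sum.remove[of "{..<n}" v "\<lambda>w. \<bar>g v - g w\<bar> powr p"] by simp
  qed
  finally show ?thesis
    by (simp add: var_p_def)
qed

theorem theorem1:
  fixes n :: nat and p :: real and f :: "nat \<Rightarrow> real"
  assumes "n \<ge> 3" and "p > 0"
  shows "var_p (K_V n) K_E p (maxop (K_V n) K_E f)
           \<le> (1 - 1 / real n) * var_p (K_V n) K_E p f"
proof -
  define c where "c = 1 - 1 / real n"
  define A where "A = (\<Sum>w<n. \<bar>f w\<bar>) / real n"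
  have "0 < c"
    using assms by (simp add: c_def field_simps)
  have "pair_diff_sum p (maxop (K_V n) K_E f) {..<n} = pair_diff_sum p (\<lambda>v. max \<bar>f v\<bar> A) {..<n}"
    unfolding pair_diff_sum_def by (intro sum.cong refl) (simp add: maxop_K A_def)
  also have "\<dots> \<le> c powr p * pair_diff_sum p (\<lambda>v. \<bar>f v\<bar>) {..<n}"
    using pair_diff_sum_max_mean_le[of "{..<n}" p "\<lambda>v. \<bar>f v\<bar>"] assms by (simp add: A_def c_def)
  also have "\<dots> \<le> c powr p * pair_diff_sum p f {..<n}"
    using assms by (intro mult_left_mono pair_diff_sum_abs_le) auto
  finally have "var_p (K_V n) K_E p (maxop (K_V n) K_E f)
      \<le> (c powr p * (pair_diff_sum p f {..<n} / 2)) powr (1 / p)"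
    unfolding var_p_K using assms by (intro powr_mono2) (auto simp: pair_diff_sum_nonneg)
  also have "\<dots> = (c powr p) powr (1 / p) * var_p (K_V n) K_E p f"
    unfolding var_p_K using pair_diff_sum_nonneg[of p f "{..<n}"] by (subst powr_mult) auto
  also have "(c powr p) powr (1 / p) = c"
    using \<open>0 < c\<close> assms by (simp add: powr_powr)
  finally show ?thesis
    by (simp add: c_def)
qed

end
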